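(* Every digraph $D$ with minimum out-degree $\delta^+(D) \ge 2$ contains a subdivision of $\overleftrightarrow{K}_3 - e$.
   Context: Digraphs are finite, loopless, have no parallel arcs, but may contain digons (pairs of anti-parallel arcs). $\overleftrightarrow{K}_3$ is the bioriented triangle: the digraph on three vertices containing both arcs $(u,v)$ and $(v,u)$ for every pair of distinct vertices; $\overleftrightarrow{K}_3 - e$ is the digraph obtained from it by deleting a single arc. A subdivision of a digraph $F$ is a digraph obtained by replacing each arc $(x,y)$ of $F$ by a directed path from $x$ to $y$, such that the paths corresponding to different arcs are internally vertex-disjoint. $\delta^+(D)$ denotes the minimum out-degree of $D$. *)

theory Defs
  imports Main
begin

text \<open>A digraph is a pair (V, A) of a finite vertex set and an arc set A \<subseteq> V \<times> V
  without loops. Parallel arcs are impossible since A is a set; digons are allowed.\<close>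
definition digraph :: "'a set \<Rightarrow> ('a \<times> 'a) set \<Rightarrow> bool" where
  "digraph V A \<longleftrightarrow> finite V \<and> A \<subseteq> V \<times> V \<and> (\<forall>v. (v, v) \<notin> A)"

definition out_degree :: "('a \<times> 'a) set \<Rightarrow> 'a \<Rightarrow> nat" where
  "out_degree A v = card {w. (v, w) \<in> A}"

definition dipath :: "'a set \<Rightarrow> ('a \<times> 'a) set \<Rightarrow> 'a list \<Rightarrow> 'a \<Rightarrow> 'a \<Rightarrow> bool" where
  "dipath V A p x y \<longleftrightarrow> 2 \<le> length p \<and> hd p = x \<and> last p = y \<and> distinct p \<and>
     set p \<subseteq> V \<and> (\<forall>i. Suc i < length p \<longrightarrow> (p ! i, p ! Suc i) \<in> A)"

definition inner_vertices :: "'a list \<Rightarrow> 'a set" where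
  "inner_vertices p = set (butlast (tl p))"

definition contains_subdivision ::
  "'a set \<Rightarrow> ('a \<times> 'a) set \<Rightarrow> 'b set \<Rightarrow> ('b \<times> 'b) set \<Rightarrow> bool" where
  "contains_subdivision V A VF AF \<longleftrightarrow>
     (\<exists>f P. inj_on f VF \<and> f ` VF \<subseteq> V \<and>
        (\<forall>x y. (x, y) \<in> AF \<longrightarrow> dipath V A (P (x, y)) (f x) (f y)) \<and>
        (\<forall>e \<in> AF. inner_vertices (P e) \<inter> f ` VF = {}) \<and>
        (\<forall>e \<in> AF. \<forall>e' \<in> AF. e \<noteq> e' \<longrightarrow> inner_vertices (P e) \<inter> inner_vertices (P e') = {}))"

definition K3_bi_verts :: "nat set" where "K3_bi_verts = {0, 1, 2}"

definition K3_bi_arcs :: "(nat \<times> nat) set" where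
  "K3_bi_arcs = {(i, j). i \<in> K3_bi_verts \<and> j \<in> K3_bi_verts \<and> i \<noteq> j}"

definition K3_bi_minus_e_arcs :: "(nat \<times> nat) set" where
  "K3_bi_minus_e_arcs = K3_bi_arcs - {(2, 0)}"

end

theory Submission
  imports Defs "HOL-Library.Sublist"
begin

(* We prove the stronger statement in which one vertex r, the root, need only have out-degree 1,
   by induction on the number of arcs. If an arc can be deleted without violating these bounds,
   delete it; so r has out-degree exactly 1 and every other vertex out-degree exactly 2. If D is
   not strongly connected, the vertices reachable from a suitable vertex span a smaller instance.
   Otherwise D has 2|V| - 1 arcs, so some vertex v has a unique in-neighbour u. If v = r, delete r
   and make u the root. If v has an out-neighbour w that is neither u nor an out-neighbour of u,
   replace the path u v w by the arc u w: a subdivision in the smaller digraph lifts back by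
   re-inserting v on that arc. In the remaining case N+(u) = {v, x} and N+(v) = {u, x}, and every
   path from x back to u avoids v, which gives a subdivision with branch vertices v, u, x. *)

abbreviation contains_K3_minus_e :: "'a set \<Rightarrow> ('a \<times> 'a) set \<Rightarrow> bool" where
  "contains_K3_minus_e V A \<equiv> contains_subdivision V A K3_bi_verts K3_bi_minus_e_arcs"

lemma dipath_iff_successively:
  "dipath V A p x y \<longleftrightarrow> 2 \<le> length p \<and> hd p = x \<and> last p = y \<and> distinct p \<and> set p \<subseteq> V \<and>
     successively (\<lambda>a b. (a, b) \<in> A) p"
  unfolding dipath_def successively_conv_nth by simp

lemma rtrancl_imp_distinct_walk:
  assumes "(x, y) \<in> A\<^sup>*" "y \<in> V" "A \<subseteq> V \<times> V"
  shows "\<exists>p. p \<noteq> [] \<and> hd p = x \<and> last p = y \<and> distinct p \<and> set p \<subseteq> V \<and>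
           successively (\<lambda>a b. (a, b) \<in> A) p"
  using assms(1)
proof (induction rule: converse_rtrancl_induct)
  case base
  show ?case using assms(2) by (intro exI[of _ "[y]"]) auto
next
  case (step x z)
  then obtain p where p: "p \<noteq> []" "hd p = z" "last p = y" "distinct p" "set p \<subseteq> V"
      "successively (\<lambda>a b. (a, b) \<in> A) p"
    by blast
  show ?case
  proof (cases "x \<in> set p")
    case True
    then obtain xs ys where "p = xs @ x # ys" by (meson split_list)
    with p show ?thesis by (intro exI[of _ "x # ys"]) (auto simp: successively_append_iff)
  next
    case False
    with p step.hyps(1) assms(3) show ?thesis
      by (intro exI[of _ "x # p"]) (auto simp: successively_Cons)
  qed
qed

lemma rtrancl_imp_dipath:
  assumes "(x, y) \<in> A\<^sup>*" "x \<noteq> y" "y \<in> V" "A \<subseteq> V \<times> V"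
  obtains p where "dipath V A p x y"
proof -
  obtain p where p: "p \<noteq> []" "hd p = x" "last p = y" "distinct p" "set p \<subseteq> V"
      "successively (\<lambda>a b. (a, b) \<in> A) p"
    using rtrancl_imp_distinct_walk[OF assms(1,3,4)] by blast
  have "2 \<le> length p"
    using p(1-3) assms(2) by (cases p; cases "tl p") auto
  with p that show ?thesis unfolding dipath_iff_successively by blast
qed

lemma dipath_predecessor:
  assumes "dipath V A p x y" "z \<in> set p" "z \<noteq> x"
  obtains a where "(a, z) \<in> A" "a \<in> set p" "a \<noteq> y"
proof -
  obtain xs ys where p: "p = xs @ z # ys" using split_list[OF assms(2)] by blast
  have path: "hd p = x" "last p = y" "distinct p" "successively (\<lambda>a b. (a, b) \<in> A) p"
    using assms(1) unfolding dipath_iff_successively by auto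
  have "xs \<noteq> []" using p path(1) assms(3) by auto
  then have "(last xs, z) \<in> A" "last xs \<in> set p"
    using path(4) unfolding p by (auto simp: successively_append_iff)
  moreover have "last xs \<noteq> y"
  proof -
    have "last xs \<in> set xs" "y \<in> set (z # ys)"
      using path(2) \<open>xs \<noteq> []\<close> unfolding p by auto
    then show ?thesis using path(3) unfolding p by auto
  qed
  ultimately show ?thesis using that by blast
qed

lemma inner_vertices_eq:
  assumes "distinct p" "2 \<le> length p"
  shows "inner_vertices p = set p - {hd p, last p}"
proof -
  obtain a q where "p = a # q" "q \<noteq> []" using assms(2) by (cases p) fastforce+
  moreover obtain m z where "q = m @ [z]" using \<open>q \<noteq> []\<close> rev_exhaust by blast
  ultimately show ?thesis using assms(1) unfolding inner_vertices_def by auto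
qed

lemma dipath_mono:
  assumes "dipath V A p x y" "V \<subseteq> V'" "A \<subseteq> A'"
  shows "dipath V' A' p x y"
proof -
  have "successively (\<lambda>a b. (a, b) \<in> A) p" using assms(1) unfolding dipath_iff_successively by blast
  then have "successively (\<lambda>a b. (a, b) \<in> A') p"
    by (rule successively_mono) (use assms(3) in blast)
  with assms(1,2) show ?thesis unfolding dipath_iff_successively by blast
qed

definition subdivision_model ::
  "'a set \<Rightarrow> ('a \<times> 'a) set \<Rightarrow> 'b set \<Rightarrow> ('b \<times> 'b) set \<Rightarrow> ('b \<Rightarrow> 'a) \<Rightarrow> ('b \<times> 'b \<Rightarrow> 'a list) \<Rightarrow> bool"
  where
  "subdivision_model V A VF AF f P \<longleftrightarrow> inj_on f VF \<and> f ` VF \<subseteq> V \<and>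
     (\<forall>x y. (x, y) \<in> AF \<longrightarrow> dipath V A (P (x, y)) (f x) (f y)) \<and>
     (\<forall>e \<in> AF. inner_vertices (P e) \<inter> f ` VF = {}) \<and>
     (\<forall>e \<in> AF. \<forall>e' \<in> AF. e \<noteq> e' \<longrightarrow> inner_vertices (P e) \<inter> inner_vertices (P e') = {})"

lemma contains_subdivision_iff_model:
  "contains_subdivision V A VF AF \<longleftrightarrow> (\<exists>f P. subdivision_model V A VF AF f P)"
  unfolding contains_subdivision_def subdivision_model_def ..

lemma subdivision_model_dipath:
  "subdivision_model V A VF AF f P \<Longrightarrow> e \<in> AF \<Longrightarrow> dipath V A (P e) (f (fst e)) (f (snd e))"
  unfolding subdivision_model_def by (cases e) simp

lemma subdivision_model_mono:
  assumes "subdivision_model V A VF AF f P" "V \<subseteq> V'" "A \<subseteq> A'"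
  shows "subdivision_model V' A' VF AF f P"
proof -
  have "dipath V' A' (P (x, y)) (f x) (f y)" if "(x, y) \<in> AF" for x y
    using subdivision_model_dipath[OF assms(1) that] assms(2,3) by (simp add: dipath_mono)
  with assms(1,2) show ?thesis unfolding subdivision_model_def by blast
qed

lemma contains_subdivision_mono:
  "contains_subdivision V A VF AF \<Longrightarrow> V \<subseteq> V' \<Longrightarrow> A \<subseteq> A' \<Longrightarrow> contains_subdivision V' A' VF AF"
  unfolding contains_subdivision_iff_model by (meson subdivision_model_mono)

fun subdivide_arc :: "'a \<Rightarrow> 'a \<Rightarrow> 'a \<Rightarrow> 'a list \<Rightarrow> 'a list" where
  "subdivide_arc u v w (a # b # r) =
     (if a = u \<and> b = w then a # v # b # r else a # subdivide_arc u v w (b # r))"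
| "subdivide_arc u v w r = r"

lemma set_subdivide_arc:
  "set (subdivide_arc u v w p) = set p \<union> (if sublist [u, w] p then {v} else {})"
  by (induction u v w p rule: subdivide_arc.induct) (auto simp: sublist_Cons_right)

lemma subdivide_arc_Cons_neq_Nil: "subdivide_arc u v w (a # p) \<noteq> []"
  by (cases p) auto

lemma hd_subdivide_arc: "p \<noteq> [] \<Longrightarrow> hd (subdivide_arc u v w p) = hd p"
  by (induction u v w p rule: subdivide_arc.induct) auto

lemma last_subdivide_arc: "last (subdivide_arc u v w p) = last p"
proof (induction u v w p rule: subdivide_arc.induct)
  case (1 u v w a b r)
  then show ?case using subdivide_arc_Cons_neq_Nil[of u v w b r] by auto
qed auto

lemma length_subdivide_arc: "length p \<le> length (subdivide_arc u v w p)"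
  by (induction u v w p rule: subdivide_arc.induct) auto

lemma distinct_subdivide_arc: "distinct p \<Longrightarrow> v \<notin> set p \<Longrightarrow> distinct (subdivide_arc u v w p)"
  by (induction u v w p rule: subdivide_arc.induct) (auto simp: set_subdivide_arc)

lemma successively_subdivide_arc:
  assumes "successively (\<lambda>a b. (a, b) \<in> insert (u, w) A) p" "distinct p" "(u, v) \<in> A" "(v, w) \<in> A"
  shows "successively (\<lambda>a b. (a, b) \<in> A) (subdivide_arc u v w p)"
  using assms
proof (induction u v w p rule: subdivide_arc.induct)
  case (1 u v w a b r)
  show ?case
  proof (cases "a = u \<and> b = w")
    case True
    have "successively (\<lambda>a b. (a, b) \<in> insert (u, w) A) (b # r)" using "1.prems"(1) by simp
    then have "successively (\<lambda>a b. (a, b) \<in> A) (b # r)"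
      by (rule successively_mono) (use "1.prems"(2) True in auto)
    with True "1.prems"(3,4) show ?thesis by simp
  next
    case False
    then show ?thesis using 1 hd_subdivide_arc[of "b # r" u v w]
      by (auto simp: successively_Cons)
  qed
qed auto

lemma dipath_subdivide_arc:
  assumes "dipath V' (insert (u, w) A) p x y" "V' \<subseteq> V" "v \<in> V - set p" "(u, v) \<in> A" "(v, w) \<in> A"
  shows "dipath V A (subdivide_arc u v w p) x y"
proof -
  have p: "2 \<le> length p" "hd p = x" "last p = y" "distinct p" "set p \<subseteq> V'"
    "successively (\<lambda>a b. (a, b) \<in> insert (u, w) A) p"
    using assms(1) unfolding dipath_iff_successively by auto
  then have "p \<noteq> []" by auto
  with p assms(2-5) show ?thesis
    using length_subdivide_arc[of p u v w] hd_subdivide_arc[of p u v w]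
    unfolding dipath_iff_successively
    by (auto simp: set_subdivide_arc last_subdivide_arc distinct_subdivide_arc
        successively_subdivide_arc)
qed

lemma inner_vertices_subdivide_arc:
  assumes "distinct p" "2 \<le> length p" "v \<notin> set p"
  shows "inner_vertices (subdivide_arc u v w p) =
           inner_vertices p \<union> (if sublist [u, w] p then {v} else {})"
proof -
  have "p \<noteq> []" using assms(2) by auto
  moreover have "hd p \<noteq> v" "last p \<noteq> v" using \<open>p \<noteq> []\<close> assms(3) by auto
  moreover have "2 \<le> length (subdivide_arc u v w p)"
    using assms(2) length_subdivide_arc[of p u v w] by linarith
  ultimately show ?thesis
    using assms distinct_subdivide_arc[OF assms(1,3)]
    by (auto simp: inner_vertices_eq set_subdivide_arc hd_subdivide_arc last_subdivide_arc)
qed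

lemma sublist_at_ends:
  assumes "distinct p" "2 \<le> length p" "sublist [u, w] p"
    and "u \<notin> inner_vertices p" "w \<notin> inner_vertices p"
  shows "hd p = u" "last p = w"
proof -
  obtain xs ys where p: "p = xs @ u # w # ys" using assms(3) unfolding sublist_def by auto
  have "u \<in> {hd p, last p}" "w \<in> {hd p, last p}"
    using assms(4,5) inner_vertices_eq[OF assms(1,2)] unfolding p by auto
  moreover have "last p \<in> set (w # ys)" "hd p \<in> set (xs @ [u])"
    unfolding p by (auto simp: hd_append)
  ultimately show "hd p = u" "last p = w" using assms(1) unfolding p by auto
qed

lemma common_arc_imp_same_ends:
  assumes p: "distinct p" "2 \<le> length p" and q: "distinct q" "2 \<le> length q"
    and ends: "{hd p, last p, hd q, last q} \<subseteq> B"
    and inner: "inner_vertices p \<inter> B = {}" "inner_vertices q \<inter> B = {}"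
      "inner_vertices p \<inter> inner_vertices q = {}"
    and arc: "sublist [u, w] p" "sublist [u, w] q"
  shows "hd p = hd q \<and> last p = last q"
proof -
  have "z \<notin> inner_vertices p \<and> z \<notin> inner_vertices q" if "z \<in> set [u, w]" for z
  proof (cases "z \<in> B")
    case False
    have "z \<in> set p" "z \<in> set q" using that arc set_mono_sublist by blast+
    with False ends have "z \<in> inner_vertices p" "z \<in> inner_vertices q"
      using inner_vertices_eq[OF p] inner_vertices_eq[OF q] by auto
    with inner(3) show ?thesis by blast
  qed (use inner(1,2) in blast)
  then show ?thesis using sublist_at_ends[OF p arc(1)] sublist_at_ends[OF q arc(2)] by simp
qed

lemma subdivision_model_arc_unique:
  assumes M: "subdivision_model V A VF AF f P" and AF: "AF \<subseteq> VF \<times> VF"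
    and e: "e \<in> AF" "e' \<in> AF" and arc: "sublist [u, w] (P e)" "sublist [u, w] (P e')"
  shows "e = e'"
proof (rule ccontr)
  assume "e \<noteq> e'"
  have path: "distinct (P d)" "2 \<le> length (P d)" "hd (P d) = f (fst d)" "last (P d) = f (snd d)"
    if "d \<in> AF" for d
    using subdivision_model_dipath[OF M that] unfolding dipath_iff_successively by auto
  have "hd (P e) = hd (P e') \<and> last (P e) = last (P e')"
  proof (rule common_arc_imp_same_ends[OF path(1,2)[OF e(1)] path(1,2)[OF e(2)] _ _ _ _ arc])
    show "{hd (P e), last (P e), hd (P e'), last (P e')} \<subseteq> f ` VF"
      using path(3,4) e AF by auto
    show "inner_vertices (P e) \<inter> f ` VF = {}" "inner_vertices (P e') \<inter> f ` VF = {}"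
      "inner_vertices (P e) \<inter> inner_vertices (P e') = {}"
      using M e \<open>e \<noteq> e'\<close> unfolding subdivision_model_def by blast+
  qed
  then have "f (fst e) = f (fst e')" "f (snd e) = f (snd e')" using path(3,4) e by simp_all
  moreover have "inj_on f VF" using M unfolding subdivision_model_def by blast
  moreover have "fst e \<in> VF" "fst e' \<in> VF" "snd e \<in> VF" "snd e' \<in> VF" using AF e by auto
  ultimately have "fst e = fst e'" "snd e = snd e'" unfolding inj_on_def by blast+
  with \<open>e \<noteq> e'\<close> show False by (simp add: prod_eq_iff)
qed

lemma subdivision_model_expand_arc:
  assumes M: "subdivision_model V' A' VF AF f P" and AF: "AF \<subseteq> VF \<times> VF"
    and V': "V' \<subseteq> V" and A': "A' \<subseteq> insert (u, w) A"
    and v: "v \<in> V - V'" and uv: "(u, v) \<in> A" and vw: "(v, w) \<in> A"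
  shows "subdivision_model V A VF AF f (\<lambda>e. subdivide_arc u v w (P e))"
proof -
  have path: "dipath V' A' (P e) (f (fst e)) (f (snd e))" if "e \<in> AF" for e
    by (rule subdivision_model_dipath[OF M that])
  have P: "distinct (P e)" "2 \<le> length (P e)" "v \<notin> set (P e)" if "e \<in> AF" for e
    using path[OF that] v unfolding dipath_iff_successively by auto
  have inner: "inner_vertices (subdivide_arc u v w (P e)) =
      inner_vertices (P e) \<union> (if sublist [u, w] (P e) then {v} else {})" if "e \<in> AF" for e
    by (rule inner_vertices_subdivide_arc[OF P[OF that]])
  have dipath: "dipath V A (subdivide_arc u v w (P (x, y))) (f x) (f y)" if "(x, y) \<in> AF" for x y
  proof (rule dipath_subdivide_arc[OF _ V' _ uv vw])
    show "dipath V' (insert (u, w) A) (P (x, y)) (f x) (f y)"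
      using dipath_mono[OF path[OF that] order_refl A'] by simp
    show "v \<in> V - set (P (x, y))" using v P(3)[OF that] by blast
  qed
  have f: "inj_on f VF" "f ` VF \<subseteq> V" "v \<notin> f ` VF"
    using M V' v unfolding subdivision_model_def by auto
  have v_inner: "v \<notin> inner_vertices (P e)" if "e \<in> AF" for e
    using P[OF that] inner_vertices_eq[OF P(1,2)[OF that]] by blast
  have avoid: "inner_vertices (subdivide_arc u v w (P e)) \<inter> f ` VF = {}" if "e \<in> AF" for e
    using M f(3) that unfolding inner[OF that] subdivision_model_def by auto
  have disjoint: "inner_vertices (subdivide_arc u v w (P e)) \<inter>
      inner_vertices (subdivide_arc u v w (P e')) = {}" if "e \<in> AF" "e' \<in> AF" "e \<noteq> e'" for e e'
  proof -
    have "\<not> (sublist [u, w] (P e) \<and> sublist [u, w] (P e'))"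
      using subdivision_model_arc_unique[OF M AF that(1,2)] that(3) by blast
    then show ?thesis
      using M v_inner that unfolding inner[OF that(1)] inner[OF that(2)] subdivision_model_def
      by auto
  qed
  show ?thesis unfolding subdivision_model_def
    by (intro conjI f(1,2) allI impI ballI dipath avoid disjoint)
qed

lemma contains_subdivision_expand_arc:
  assumes "contains_subdivision V' A' VF AF" "AF \<subseteq> VF \<times> VF" "V' \<subseteq> V" "A' \<subseteq> insert (u, w) A"
    and "v \<in> V - V'" "(u, v) \<in> A" "(v, w) \<in> A"
  shows "contains_subdivision V A VF AF"
  using assms(1) subdivision_model_expand_arc[OF _ assms(2-7)]
  unfolding contains_subdivision_iff_model by blast

lemma K3_bi_minus_e_arcs_eq: "K3_bi_minus_e_arcs = {(0, 1), (1, 0), (1, 2), (2, 1), (0, 2)}"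
  unfolding K3_bi_minus_e_arcs_def K3_bi_arcs_def K3_bi_verts_def by auto

lemma K3_bi_minus_e_arcs_subset: "K3_bi_minus_e_arcs \<subseteq> K3_bi_verts \<times> K3_bi_verts"
  unfolding K3_bi_minus_e_arcs_def K3_bi_arcs_def by auto

lemma contains_K3_minus_e_of_digon:
  assumes arcs: "(u, v) \<in> A" "(v, u) \<in> A" "(u, x) \<in> A" "(v, x) \<in> A" and "v \<in> V"
    and Q: "dipath V A Q x u" "v \<notin> set Q"
  shows "contains_K3_minus_e V A"
proof -
  obtain q where Q_eq: "Q = x # q" "q \<noteq> []" "last q = u"
    using Q(1) unfolding dipath_iff_successively by (cases Q) fastforce+
  have Q_props: "distinct Q" "2 \<le> length Q" "hd Q = x" "last Q = u" "set Q \<subseteq> V"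
    using Q(1) unfolding dipath_iff_successively by auto
  then have verts: "u \<noteq> v" "x \<noteq> v" "x \<noteq> u" "u \<in> V" "x \<in> V"
    using Q(2) Q_eq by auto
  define f :: "nat \<Rightarrow> 'a" where "f i = [v, u, x] ! i" for i
  define P where "P e = (if e = (2, 1) then Q else [f (fst e), f (snd e)])" for e
  have f_image: "f ` K3_bi_verts = {v, u, x}"
    unfolding K3_bi_verts_def f_def by auto
  have "inj_on f K3_bi_verts"
    unfolding K3_bi_verts_def f_def inj_on_def using verts by auto
  moreover have "f ` K3_bi_verts \<subseteq> V" using f_image verts \<open>v \<in> V\<close> by simp
  moreover have "dipath V A (P (a, b)) (f a) (f b)" if "(a, b) \<in> K3_bi_minus_e_arcs" for a b
    using that Q(1) arcs verts \<open>v \<in> V\<close>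
    unfolding K3_bi_minus_e_arcs_eq P_def f_def by (auto simp: dipath_iff_successively)
  moreover have "inner_vertices (P e) \<subseteq> set Q - {x, u}" for e
  proof -
    have "inner_vertices Q = set Q - {x, u}"
      using inner_vertices_eq[OF Q_props(1,2)] Q_props(3,4) by simp
    then show ?thesis by (cases "e = (2, 1)") (simp_all add: P_def inner_vertices_def)
  qed
  then have "inner_vertices (P e) \<inter> f ` K3_bi_verts = {}" for e
    using Q(2) unfolding f_image by blast
  moreover have "inner_vertices (P e) \<inter> inner_vertices (P e') = {}" if "e \<noteq> e'" for e e'
    using that unfolding P_def inner_vertices_def by auto
  ultimately show ?thesis unfolding contains_subdivision_def
    by (intro exI[of _ f] exI[of _ P] conjI allI impI ballI) auto
qed

lemma finite_out_neighbours: "digraph V A \<Longrightarrow> finite {w. (v, w) \<in> A}"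
  unfolding digraph_def by (auto intro: finite_subset[of _ V])

lemma out_degree_pos_imp_arc: "0 < out_degree A v \<Longrightarrow> \<exists>w. (v, w) \<in> A"
  unfolding out_degree_def by (auto simp: card_gt_0_iff)

lemma finite_arcs: "digraph V A \<Longrightarrow> finite A"
  unfolding digraph_def using finite_subset finite_cartesian_product by blast

lemma digraph_restrict: "digraph V A \<Longrightarrow> X \<subseteq> V \<Longrightarrow> digraph X (A \<inter> X \<times> X)"
  unfolding digraph_def by (auto intro: finite_subset)

lemma card_restrict_less:
  assumes "digraph V A" "(a, b) \<in> A" "(a, b) \<notin> X \<times> X"
  shows "card (A \<inter> X \<times> X) < card A"
  using finite_arcs[OF assms(1)] assms(2,3) by (intro psubset_card_mono) auto

lemma out_degree_restrict:
  "{w. (a, w) \<in> A} \<subseteq> X \<Longrightarrow> a \<in> X \<Longrightarrow> out_degree (A \<inter> X \<times> X) a = out_degree A a"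
  unfolding out_degree_def by (rule arg_cong[of _ _ card]) auto

lemma card_arcs_eq_sum_out_degree:
  assumes "finite V" "A \<subseteq> V \<times> V"
  shows "card A = (\<Sum>v\<in>V. out_degree A v)"
proof -
  have "A = (SIGMA v:V. {w. (v, w) \<in> A})" using assms(2) by auto
  moreover have "finite {w. (v, w) \<in> A}" for v
    using assms by (auto intro: finite_subset[of _ V])
  ultimately show ?thesis using assms(1) unfolding out_degree_def by (metis card_SigmaI)
qed

lemma ex_in_degree_le_1:
  assumes "finite V" "A \<subseteq> V \<times> V" "card A < 2 * card V"
  obtains v where "v \<in> V" "card {u. (u, v) \<in> A} \<le> 1"
proof -
  have in_sum: "card A = (\<Sum>v\<in>V. card {u. (u, v) \<in> A})"
    using card_arcs_eq_sum_out_degree[of V "A\<inverse>"] assms(1,2) by (auto simp: out_degree_def)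
  have "\<exists>v\<in>V. card {u. (u, v) \<in> A} \<le> 1"
  proof (rule ccontr)
    assume "\<not> (\<exists>v\<in>V. card {u. (u, v) \<in> A} \<le> 1)"
    then have "(\<Sum>v\<in>V. 2) \<le> card A" unfolding in_sum by (intro sum_mono) auto
    with assms(3) show False by simp
  qed
  with that show ?thesis by blast
qed

definition out_degree_2_except :: "'a set \<Rightarrow> ('a \<times> 'a) set \<Rightarrow> 'a \<Rightarrow> bool" where
  "out_degree_2_except V A r \<longleftrightarrow>
     digraph V A \<and> r \<in> V \<and> 1 \<le> out_degree A r \<and> (\<forall>v \<in> V - {r}. 2 \<le> out_degree A v)"

lemma out_degree_2_except_out_degree_ge:
  "out_degree_2_except V A r \<Longrightarrow> v \<in> V \<Longrightarrow> (if v = r then 1 else 2) \<le> out_degree A v"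
  unfolding out_degree_2_except_def by auto

lemma out_degree_2_except_has_arc:
  assumes "out_degree_2_except V A r" "v \<in> V"
  obtains w where "(v, w) \<in> A"
proof -
  have "0 < out_degree A v"
    using out_degree_2_except_out_degree_ge[OF assms] by (cases "v = r") auto
  then have "\<exists>w. (v, w) \<in> A" by (rule out_degree_pos_imp_arc)
  with that show ?thesis by blast
qed

lemma out_degree_2_except_delete_arc:
  assumes G: "out_degree_2_except V A r" and pq: "(p, q) \<in> A"
    and surplus: "(if p = r then 1 else 2) < out_degree A p"
  shows "out_degree_2_except V (A - {(p, q)}) r"
proof -
  have D: "digraph V A" using G unfolding out_degree_2_except_def by blast
  have "out_degree (A - {(p, q)}) z = out_degree A z - (if z = p then 1 else 0)" for z
  proof -
    have "{w. (z, w) \<in> A - {(p, q)}} = {w. (z, w) \<in> A} - (if z = p then {q} else {})" by auto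
    then show ?thesis
      using pq finite_out_neighbours[OF D] unfolding out_degree_def by (simp add: card_Diff_singleton)
  qed
  moreover have "digraph V (A - {(p, q)})" using D unfolding digraph_def by auto
  ultimately show ?thesis using G surplus unfolding out_degree_2_except_def by auto
qed

lemma out_degree_2_except_exact_degrees:
  assumes G: "out_degree_2_except V A r"
    and no_surplus: "\<forall>(p, q) \<in> A. out_degree A p \<le> (if p = r then 1 else 2)"
    and "v \<in> V"
  shows "out_degree A v = (if v = r then 1 else 2)"
proof -
  obtain w where "(v, w) \<in> A" using out_degree_2_except_has_arc[OF G \<open>v \<in> V\<close>] .
  then have "out_degree A v \<le> (if v = r then 1 else 2)" using bspec[OF no_surplus \<open>(v, w) \<in> A\<close>] by simp
  then show ?thesis using out_degree_2_except_out_degree_ge[OF G \<open>v \<in> V\<close>] by (rule antisym)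
qed

lemma out_degree_2_except_reachable:
  assumes G: "out_degree_2_except V A r" and "p \<in> V" "q \<in> V" "(p, q) \<notin> A\<^sup>*"
  defines "X \<equiv> {z. (p, z) \<in> A\<^sup>*}"
  shows "out_degree_2_except X (A \<inter> X \<times> X) (if r \<in> X then r else p)"
    and "card (A \<inter> X \<times> X) < card A"
    and "X \<subseteq> V"
proof -
  have D: "digraph V A" "A \<subseteq> V \<times> V" using G unfolding out_degree_2_except_def digraph_def by auto
  show "X \<subseteq> V"
  proof
    fix z assume "z \<in> X"
    then have "(p, z) \<in> A\<^sup>*" unfolding X_def by simp
    then show "z \<in> V" by (cases rule: rtranclE) (use \<open>p \<in> V\<close> D(2) in auto)
  qed
  have out_eq: "out_degree (A \<inter> X \<times> X) a = out_degree A a" if "a \<in> X" for a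
    using that rtrancl_into_rtrancl by (intro out_degree_restrict) (auto simp: X_def)
  have "p \<in> X" unfolding X_def by simp
  show "out_degree_2_except X (A \<inter> X \<times> X) (if r \<in> X then r else p)"
    unfolding out_degree_2_except_def
  proof (intro conjI ballI)
    show "digraph X (A \<inter> X \<times> X)" by (rule digraph_restrict[OF D(1) \<open>X \<subseteq> V\<close>])
    show "(if r \<in> X then r else p) \<in> X" using \<open>p \<in> X\<close> by simp
    show "1 \<le> out_degree (A \<inter> X \<times> X) (if r \<in> X then r else p)"
    proof (cases "r \<in> X")
      case True
      then show ?thesis using G unfolding out_degree_2_except_def by (simp add: out_eq)
    next
      case False
      then have "p \<noteq> r" using \<open>p \<in> X\<close> by auto
      then show ?thesis
        using False out_degree_2_except_out_degree_ge[OF G \<open>p \<in> V\<close>] by (simp add: out_eq[OF \<open>p \<in> X\<close>])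
    qed
    fix z assume "z \<in> X - {if r \<in> X then r else p}"
    then have "z \<in> V - {r}" "z \<in> X" using \<open>X \<subseteq> V\<close> by (auto split: if_splits)
    then show "2 \<le> out_degree (A \<inter> X \<times> X) z"
      using G unfolding out_degree_2_except_def by (simp add: out_eq)
  qed
  obtain w where "(q, w) \<in> A" using out_degree_2_except_has_arc[OF G \<open>q \<in> V\<close>] .
  moreover have "q \<notin> X" using assms(4) unfolding X_def by simp
  ultimately show "card (A \<inter> X \<times> X) < card A" by (intro card_restrict_less[OF D(1)]) auto
qed

lemma out_degree_2_except_delete_root:
  assumes G: "out_degree_2_except V A r" and in_r: "{a. (a, r) \<in> A} = {u}"
  defines "V' \<equiv> V - {r}"
  shows "out_degree_2_except V' (A \<inter> V' \<times> V') u" and "card (A \<inter> V' \<times> V') < card A"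
proof -
  have D: "digraph V A" "A \<subseteq> V \<times> V" "\<And>z. (z, z) \<notin> A"
    using G unfolding out_degree_2_except_def digraph_def by auto
  have ur: "(u, r) \<in> A" using in_r by blast
  then have "u \<in> V'" unfolding V'_def using D(2,3) by auto
  have "{w. (u, w) \<in> A \<inter> V' \<times> V'} = {w. (u, w) \<in> A} - {r}"
    using \<open>u \<in> V'\<close> D(2) unfolding V'_def by auto
  then have "out_degree (A \<inter> V' \<times> V') u = out_degree A u - 1"
    using ur finite_out_neighbours[OF D(1)] unfolding out_degree_def by (simp add: card_Diff_singleton)
  moreover have "2 \<le> out_degree A u"
    using G \<open>u \<in> V'\<close> unfolding out_degree_2_except_def V'_def by blast
  ultimately have "1 \<le> out_degree (A \<inter> V' \<times> V') u" by simp
  moreover have "out_degree (A \<inter> V' \<times> V') z = out_degree A z" if "z \<in> V' - {u}" for z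
    using that in_r D(2) by (intro out_degree_restrict) (auto simp: V'_def)
  moreover have "digraph V' (A \<inter> V' \<times> V')" by (rule digraph_restrict[OF D(1)]) (simp add: V'_def)
  ultimately show "out_degree_2_except V' (A \<inter> V' \<times> V') u"
    using G \<open>u \<in> V'\<close> unfolding out_degree_2_except_def V'_def by auto
  show "card (A \<inter> V' \<times> V') < card A" by (rule card_restrict_less[OF D(1) ur]) (simp add: V'_def)
qed

lemma card_bypass_less:
  assumes D: "digraph V A" and uv: "(u, v) \<in> A" and vw: "(v, w) \<in> A" and "(u, w) \<notin> A"
  shows "card (insert (u, w) (A \<inter> (V - {v}) \<times> (V - {v}))) < card A"
proof -
  have fin: "finite A" by (rule finite_arcs[OF D])
  have "u \<noteq> v" using uv D unfolding digraph_def by blast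
  then have two: "card {(u, v), (v, w)} = 2" by simp
  have "card (insert (u, w) (A \<inter> (V - {v}) \<times> (V - {v}))) = Suc (card (A \<inter> (V - {v}) \<times> (V - {v})))"
    using \<open>(u, w) \<notin> A\<close> fin by simp
  moreover have "card (A \<inter> (V - {v}) \<times> (V - {v})) \<le> card (A - {(u, v), (v, w)})"
    by (rule card_mono) (use fin in auto)
  moreover have "card (A - {(u, v), (v, w)}) = card A - 2"
    using uv vw fin two by (simp add: card_Diff_subset)
  moreover have "2 \<le> card A"
    using card_mono[OF fin, of "{(u, v), (v, w)}"] uv vw two by simp
  ultimately show ?thesis by linarith
qed

lemma out_degree_2_except_bypass:
  assumes G: "out_degree_2_except V A r" and in_v: "{a. (a, v) \<in> A} = {u}" and "v \<noteq> r"
    and vw: "(v, w) \<in> A" and "w \<noteq> u" and "(u, w) \<notin> A"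
  defines "V' \<equiv> V - {v}"
  shows "out_degree_2_except V' (insert (u, w) (A \<inter> V' \<times> V')) r"
proof -
  define A' where "A' = insert (u, w) (A \<inter> V' \<times> V')"
  have D: "digraph V A" "finite V" "A \<subseteq> V \<times> V" "\<And>z. (z, z) \<notin> A"
    using G unfolding out_degree_2_except_def digraph_def by auto
  have uv: "(u, v) \<in> A" using in_v by blast
  then have verts: "u \<in> V'" "w \<in> V'" "r \<in> V'"
    using D(3,4) vw G \<open>v \<noteq> r\<close> unfolding V'_def out_degree_2_except_def by auto
  have "out_degree A' z = out_degree A z" if "z \<in> V'" for z
  proof (cases "z = u")
    case True
    have "{y. (z, y) \<in> A'} = insert w ({y. (u, y) \<in> A} - {v})"
      using True D(3) verts unfolding A'_def V'_def by auto
    moreover have "0 < card {y. (u, y) \<in> A}"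
      using uv finite_out_neighbours[OF D(1), of u] by (auto simp: card_gt_0_iff)
    ultimately show ?thesis
      using True uv \<open>(u, w) \<notin> A\<close> finite_out_neighbours[OF D(1), of u]
      unfolding out_degree_def by (simp add: card_Diff_singleton)
  next
    case False
    have "{y. (z, y) \<in> A'} = {y. (z, y) \<in> A}"
      using False that in_v D(3) unfolding A'_def V'_def by auto
    then show ?thesis unfolding out_degree_def by simp
  qed
  moreover have "digraph V' A'"
    unfolding digraph_def A'_def using verts D(2,4) \<open>w \<noteq> u\<close> unfolding V'_def by auto
  ultimately show ?thesis
    using G verts unfolding out_degree_2_except_def V'_def A'_def by auto
qed

lemma no_bypass_common_out_neighbour:
  assumes D: "digraph V A"
    and exact: "\<forall>z\<in>V. out_degree A z = (if z = r then 1 else 2)"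
    and in_v: "{a. (a, v) \<in> A} = {u}" and "v \<noteq> r"
    and no_bypass: "\<forall>w. (v, w) \<in> A \<longrightarrow> w = u \<or> (u, w) \<in> A"
  obtains x where "(u, x) \<in> A" "(v, u) \<in> A" "(v, x) \<in> A" "x \<noteq> u" "x \<noteq> v"
proof -
  have AV: "A \<subseteq> V \<times> V" and loop: "\<And>z. (z, z) \<notin> A" using D unfolding digraph_def by auto
  have uv: "(u, v) \<in> A" using in_v by blast
  then have "u \<in> V" "v \<in> V" using AV by auto
  have out_v: "{w. (v, w) \<in> A} \<subseteq> insert u ({w. (u, w) \<in> A} - {v})"
    using no_bypass loop by auto
  have card_v: "card {w. (v, w) \<in> A} = 2"
    using exact \<open>v \<in> V\<close> \<open>v \<noteq> r\<close> unfolding out_degree_def by auto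
  have "u \<noteq> r"
  proof
    assume "u = r"
    then have "card {w. (u, w) \<in> A} = 1" using exact \<open>u \<in> V\<close> unfolding out_degree_def by auto
    then obtain z where "{w. (u, w) \<in> A} = {z}" by (rule card_1_singletonE)
    with uv have "{w. (u, w) \<in> A} = {v}" by auto
    with out_v have "card {w. (v, w) \<in> A} \<le> card {u}" by (intro card_mono) auto
    with card_v show False by simp
  qed
  then have "card ({w. (u, w) \<in> A} - {v}) = 1"
    using exact \<open>u \<in> V\<close> uv finite_out_neighbours[OF D] unfolding out_degree_def
    by (simp add: card_Diff_singleton)
  then obtain x where x: "{w. (u, w) \<in> A} - {v} = {x}" by (rule card_1_singletonE)
  have sub: "{w. (v, w) \<in> A} \<subseteq> {u, x}" using out_v x by auto
  have "x \<noteq> u"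
  proof
    assume "x = u"
    with sub have "card {w. (v, w) \<in> A} \<le> card {u}" by (intro card_mono) auto
    with card_v show False by simp
  qed
  then have "card {w. (v, w) \<in> A} = card {u, x}" using card_v by simp
  then have "{w. (v, w) \<in> A} = {u, x}" using card_subset_eq[OF _ sub] by simp
  then show ?thesis by (intro that) (use x \<open>x \<noteq> u\<close> in auto)
qed

lemma contains_K3_minus_e_if_no_bypass:
  assumes D: "digraph V A"
    and exact: "\<forall>z\<in>V. out_degree A z = (if z = r then 1 else 2)"
    and strong: "\<forall>p\<in>V. \<forall>q\<in>V. (p, q) \<in> A\<^sup>*"
    and in_v: "{a. (a, v) \<in> A} = {u}" and "v \<noteq> r"
    and no_bypass: "\<forall>w. (v, w) \<in> A \<longrightarrow> w = u \<or> (u, w) \<in> A"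
  shows "contains_K3_minus_e V A"
proof -
  obtain x where ux: "(u, x) \<in> A" and vu: "(v, u) \<in> A" and vx: "(v, x) \<in> A"
    and "x \<noteq> u" "x \<noteq> v"
    by (rule no_bypass_common_out_neighbour[OF D exact in_v \<open>v \<noteq> r\<close> no_bypass])
  have AV: "A \<subseteq> V \<times> V" using D unfolding digraph_def by auto
  have uv: "(u, v) \<in> A" using in_v by blast
  then have "u \<in> V" "v \<in> V" using AV by auto
  have "(x, u) \<in> A\<^sup>*" using strong ux AV \<open>u \<in> V\<close> by blast
  then obtain Q where Q: "dipath V A Q x u"
    by (rule rtrancl_imp_dipath[OF _ \<open>x \<noteq> u\<close> \<open>u \<in> V\<close> AV])
  have "v \<notin> set Q"
  proof
    assume "v \<in> set Q"
    moreover have "v \<noteq> x" using \<open>x \<noteq> v\<close> by simp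
    ultimately obtain a where "(a, v) \<in> A" "a \<in> set Q" "a \<noteq> u"
      by (rule dipath_predecessor[OF Q])
    with in_v show False by blast
  qed
  show ?thesis by (rule contains_K3_minus_e_of_digon[OF uv vu ux vx \<open>v \<in> V\<close> Q \<open>v \<notin> set Q\<close>])
qed

lemma strongly_connected_unique_in_neighbour:
  assumes G: "out_degree_2_except V A r"
    and exact: "\<forall>z\<in>V. out_degree A z = (if z = r then 1 else 2)"
    and strong: "\<forall>p\<in>V. \<forall>q\<in>V. (p, q) \<in> A\<^sup>*"
  obtains v u where "v \<in> V" "{a. (a, v) \<in> A} = {u}"
proof -
  have D: "finite V" "A \<subseteq> V \<times> V" "r \<in> V" "\<And>z. (z, z) \<notin> A"
    using G unfolding out_degree_2_except_def digraph_def by auto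
  have "card A = (\<Sum>z\<in>V. if z = r then 1 else 2)"
    using card_arcs_eq_sum_out_degree[OF D(1,2)] exact by simp
  also have "\<dots> = 1 + 2 * (card V - 1)"
    using D(1,3) by (simp add: sum.remove)
  also have "\<dots> < 2 * card V"
    using card_gt_0_iff[of V] D(1,3) by auto
  finally obtain v where "v \<in> V" and in_le_1: "card {u. (u, v) \<in> A} \<le> 1"
    by (rule ex_in_degree_le_1[OF D(1,2)])
  obtain s where "(r, s) \<in> A" using out_degree_2_except_has_arc[OF G D(3)] .
  then have "s \<in> V" "s \<noteq> r" using D(2,4) by auto
  then obtain z where "z \<in> V" "z \<noteq> v" using D(3) by metis
  then have "(z, v) \<in> A\<^sup>*" using strong \<open>v \<in> V\<close> by blast
  with \<open>z \<noteq> v\<close> have "(z, v) \<in> A\<^sup>+" by (simp add: rtrancl_eq_or_trancl)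
  then obtain u where "(u, v) \<in> A" by (rule tranclE)
  moreover have "finite {a. (a, v) \<in> A}" using D(1,2) by (auto intro: finite_subset[of _ V])
  ultimately have "{a. (a, v) \<in> A} = {u}"
    using in_le_1 by (auto simp: card_le_Suc0_iff_eq)
  with \<open>v \<in> V\<close> show ?thesis by (rule that)
qed

lemma contains_K3_minus_e_if_strongly_connected:
  fixes V :: "'a set"
  assumes IH: "\<And>(V' :: 'a set) A' r'. card A' < card A \<Longrightarrow> out_degree_2_except V' A' r' \<Longrightarrow>
      contains_K3_minus_e V' A'"
    and G: "out_degree_2_except V A r"
    and exact: "\<forall>z\<in>V. out_degree A z = (if z = r then 1 else 2)"
    and strong: "\<forall>p\<in>V. \<forall>q\<in>V. (p, q) \<in> A\<^sup>*"
  shows "contains_K3_minus_e V A"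
proof -
  have D: "digraph V A" using G unfolding out_degree_2_except_def by blast
  obtain v u where "v \<in> V" and in_v: "{a. (a, v) \<in> A} = {u}"
    by (rule strongly_connected_unique_in_neighbour[OF G exact strong])
  consider "v = r" | w where "v \<noteq> r" "(v, w) \<in> A" "w \<noteq> u" "(u, w) \<notin> A"
    | "v \<noteq> r" "\<forall>w. (v, w) \<in> A \<longrightarrow> w = u \<or> (u, w) \<in> A"
    by blast
  then show ?thesis
  proof cases
    case 1
    let ?V' = "V - {r}"
    have "contains_K3_minus_e ?V' (A \<inter> ?V' \<times> ?V')"
      using out_degree_2_except_delete_root(2,1)[OF G in_v[unfolded 1]] by (rule IH)
    then show ?thesis by (rule contains_subdivision_mono) auto
  next
    case (2 w)
    let ?V' = "V - {v}"
    have "(u, v) \<in> A" using in_v by blast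
    have "contains_K3_minus_e ?V' (insert (u, w) (A \<inter> ?V' \<times> ?V'))"
      using card_bypass_less[OF D \<open>(u, v) \<in> A\<close> 2(2,4)] out_degree_2_except_bypass[OF G in_v 2]
      by (rule IH)
    then show ?thesis
      by (rule contains_subdivision_expand_arc[OF _ K3_bi_minus_e_arcs_subset])
        (use \<open>v \<in> V\<close> in_v 2 in auto)
  next
    case 3
    show ?thesis by (rule contains_K3_minus_e_if_no_bypass[OF D exact strong in_v 3])
  qed
qed

lemma contains_K3_minus_e_if_out_degree_2_except:
  "out_degree_2_except V A r \<Longrightarrow> contains_K3_minus_e V A"
proof (induction "card A" arbitrary: V A r rule: less_induct)
  case less
  note IH = less.hyps
  show ?case
  proof (cases "\<exists>(p, q) \<in> A. (if p = r then 1 else 2) < out_degree A p")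
    case True
    then obtain p q where pq: "(p, q) \<in> A" "(if p = r then 1 else 2) < out_degree A p" by blast
    have "finite A" using less.prems finite_arcs unfolding out_degree_2_except_def by blast
    have "contains_K3_minus_e V (A - {(p, q)})"
      using card_Diff1_less[OF \<open>finite A\<close> pq(1)] out_degree_2_except_delete_arc[OF less.prems pq]
      by (rule IH)
    then show ?thesis by (rule contains_subdivision_mono) auto
  next
    case False
    then have "\<forall>(p, q) \<in> A. out_degree A p \<le> (if p = r then 1 else 2)" by auto
    then have exact: "\<forall>z\<in>V. out_degree A z = (if z = r then 1 else 2)"
      using out_degree_2_except_exact_degrees[OF less.prems] by blast
    show ?thesis
    proof (cases "\<forall>p\<in>V. \<forall>q\<in>V. (p, q) \<in> A\<^sup>*")
      case True
      show ?thesis by (rule contains_K3_minus_e_if_strongly_connected[OF IH less.prems exact True])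
    next
      case False
      then obtain p q where pq: "p \<in> V" "q \<in> V" "(p, q) \<notin> A\<^sup>*" by blast
      let ?X = "{z. (p, z) \<in> A\<^sup>*}"
      have "contains_K3_minus_e ?X (A \<inter> ?X \<times> ?X)"
        using out_degree_2_except_reachable(2,1)[OF less.prems pq] by (rule IH)
      then show ?thesis
        by (rule contains_subdivision_mono[OF _ out_degree_2_except_reachable(3)[OF less.prems pq]]) auto
    qed
  qed
qed

theorem theorem1p2:
  fixes V :: "'a set" and A :: "('a \<times> 'a) set"
  assumes "digraph V A"
    and "V \<noteq> {}"
    and "\<forall>v \<in> V. 2 \<le> out_degree A v"
  shows "contains_subdivision V A K3_bi_verts K3_bi_minus_e_arcs"
proof -
  obtain r where "r \<in> V" using assms(2) by blast
  with assms(1,3) have "out_degree_2_except V A r" unfolding out_degree_2_except_def by force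
  then show ?thesis by (rule contains_K3_minus_e_if_out_degree_2_except)
qed

end
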